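(* Let $\mathcal{H}^S$ and $\mathcal{H}^A$ be $d$-dimensional Hilbert spaces with fixed orthonormal bases. There exists an isometry $W:\mathcal{H}^S\to\mathcal{H}^S\otimes\mathcal{H}^A$ such that for every state $\rho^S$ on $\mathcal{H}^S$, \[ \mathcal{L}_C(\rho^S)=\mathcal{L}_E(W\rho^SW^\dagger). \]
   Context: The coherence rank $R_C(|\psi\rangle)$ of a pure state $|\psi\rangle\in\mathcal{H}^S$ is the number of nonzero coefficients of $|\psi\rangle$ in the fixed basis; $\mathcal{L}_C(|\psi\rangle)=\log_2R_C(|\psi\rangle)$; for a state $\rho$, $\mathcal{L}_C(\rho)=\min\sum_ip_i\mathcal{L}_C(|\psi_i\rangle)$ over all pure-state decompositions $\rho=\sum_ip_i|\psi_i\rangle\langle\psi_i|$. For a bipartite pure state $|\psi^{SA}\rangle$ with Schmidt rank $r$, $\mathcal{L}_E(|\psi^{SA}\rangle)=\log_2r$, and for a bipartite state $\rho^{SA}$, $\mathcal{L}_E(\rho^{SA})=\min\sum_ip_i\mathcal{L}_E(|\psi_i^{SA}\rangle)$ over all pure-state decompositions of $\rho^{SA}$. *)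

theory Defs
  imports "Jordan_Normal_Form.DL_Rank" "Jordan_Normal_Form.Schur_Decomposition"
begin

text \<open>Hilbert space H^S = C^d with the computational (fixed orthonormal) basis e_0..e_(d-1);
  H^S \<otimes> H^A = C^(d*d), where the basis vector e_i \<otimes> e_j has index i*d + j.\<close>

definition coh_rank :: "complex vec \<Rightarrow> nat" where
  "coh_rank v = card {i. i < dim_vec v \<and> v $ i \<noteq> 0}"

definition LC_pure :: "complex vec \<Rightarrow> real" where
  "LC_pure v = log 2 (real (coh_rank v))"

definition coeff_mat :: "nat \<Rightarrow> complex vec \<Rightarrow> complex mat" where
  "coeff_mat d psi = mat d d (\<lambda>(i, j). psi $ (i * d + j))"

definition schmidt_rank :: "nat \<Rightarrow> complex vec \<Rightarrow> nat" where
  "schmidt_rank d psi = vec_space.rank d (coeff_mat d psi)"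

definition LE_pure :: "nat \<Rightarrow> complex vec \<Rightarrow> real" where
  "LE_pure d psi = log 2 (real (schmidt_rank d psi))"

definition unit_vec_c :: "nat \<Rightarrow> complex vec \<Rightarrow> bool" where
  "unit_vec_c n v \<longleftrightarrow> v \<in> carrier_vec n \<and> (\<Sum>j<n. (cmod (v $ j))\<^sup>2) = 1"

definition density_mat :: "nat \<Rightarrow> complex mat \<Rightarrow> bool" where
  "density_mat n \<rho> \<longleftrightarrow> \<rho> \<in> carrier_mat n n \<and> mat_adjoint \<rho> = \<rho> \<and>
     (\<forall>v \<in> carrier_vec n. conjugate v \<bullet> (\<rho> *\<^sub>v v) \<in> \<real> \<and> 0 \<le> Re (conjugate v \<bullet> (\<rho> *\<^sub>v v))) \<and>
     (\<Sum>i<n. \<rho> $$ (i, i)) = 1"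

definition pure_decomp :: "nat \<Rightarrow> complex mat \<Rightarrow> nat \<Rightarrow> (nat \<Rightarrow> real) \<Rightarrow> (nat \<Rightarrow> complex vec) \<Rightarrow> bool" where
  "pure_decomp n \<rho> k p \<psi> \<longleftrightarrow>
     (\<forall>i<k. 0 \<le> p i \<and> unit_vec_c n (\<psi> i)) \<and> (\<Sum>i<k. p i) = 1 \<and>
     \<rho> = mat n n (\<lambda>(a, b). \<Sum>i<k. complex_of_real (p i) * (\<psi> i $ a) * cnj (\<psi> i $ b))"

definition LC :: "nat \<Rightarrow> complex mat \<Rightarrow> real" where
  "LC n \<rho> = Inf {(\<Sum>i<k. p i * LC_pure (\<psi> i)) | k p \<psi>. pure_decomp n \<rho> k p \<psi>}"

definition LE :: "nat \<Rightarrow> complex mat \<Rightarrow> real" where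
  "LE d \<rho> = Inf {(\<Sum>i<k. p i * LE_pure d (\<psi> i)) | k p \<psi>. pure_decomp (d * d) \<rho> k p \<psi>}"

end

theory Submission
  imports Defs "Jordan_Normal_Form.DL_Rank_Submatrix"
begin

(* The isometry W e_k = e_k \<otimes> e_k sends a pure state \<psi> to a vector whose
   coefficient matrix is diag(\<psi>), whose rank is the coherence rank of \<psi>; so W
   turns L_C of pure states into L_E. Pushing a decomposition of \<rho> forward along W
   gives a decomposition of W \<rho> W\<dagger> with the same average. Conversely, W \<rho> W\<dagger>
   vanishes on the diagonal entries at e_i \<otimes> e_j with i \<noteq> j, so every component of
   positive weight of a decomposition of W \<rho> W\<dagger> lies in the range of W and pulls
   back to a decomposition of \<rho> with the same average. Hence both infima range over
   the same set of averages. *)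

lemma det_mat_diag: "det (mat_diag n f) = (\<Prod>i<n. f i)"
proof -
  have "upper_triangular (mat_diag n f)"
    by (auto simp: upper_triangular_def mat_diag_def)
  then have "det (mat_diag n f) = prod_list (diag_mat (mat_diag n f))"
    by (rule det_upper_triangular[OF _ mat_diag_dim])
  also have "\<dots> = (\<Prod>i<n. f i)"
    by (simp add: prod_list_diag_prod mat_diag_def atLeast0LessThan)
  finally show ?thesis .
qed

lemma rank_mat_diag_le_card:
  fixes f :: "nat \<Rightarrow> 'a::field"
  assumes "finite S"
  shows "vec_space.rank n (mat_diag n (\<lambda>i. if i \<in> S then f i else 0)) \<le> card S"
  using assms
proof (induction S rule: finite_induct)
  case empty
  have "mat_diag n (\<lambda>i. if i \<in> {} then f i else 0) = 0\<^sub>m n n"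
    by (auto simp: mat_diag_def)
  then show ?case by (simp add: vec_space.rank_0I)
next
  case (insert x S)
  have split: "mat_diag n (\<lambda>i. if i \<in> insert x S then f i else 0)
      = mat_diag n (\<lambda>i. if i \<in> S then f i else 0) + mat_diag n (\<lambda>i. if i = x then f i else 0)"
    using insert.hyps(2) by (auto simp: mat_diag_def)
  have single: "vec_space.rank n (mat_diag n (\<lambda>i. if i = x then f i else 0)) \<le> 1"
    by (rule vec_space.rank_le_1_product_entries[where f = "\<lambda>i. if i = x then f i else 0"
          and g = "\<lambda>j. if j = x then 1 else 0"]) (auto simp: mat_diag_def)
  have "vec_space.rank n (mat_diag n (\<lambda>i. if i \<in> insert x S then f i else 0))
      \<le> vec_space.rank n (mat_diag n (\<lambda>i. if i \<in> S then f i else 0))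
        + vec_space.rank n (mat_diag n (\<lambda>i. if i = x then f i else 0))"
    unfolding split by (rule vec_space.rank_subadditive[OF mat_diag_dim mat_diag_dim])
  with insert single show ?case
    by simp
qed

lemma rank_mat_diag_ge_card:
  fixes f :: "nat \<Rightarrow> 'a::field"
  shows "card {i. i < n \<and> f i \<noteq> 0} \<le> vec_space.rank n (mat_diag n f)"
proof -
  define S where "S = {i. i < n \<and> f i \<noteq> 0}"
  have S: "{i. i < n \<and> i \<in> S} = S" unfolding S_def by auto
  have pick_S: "pick S i \<in> S" if "i < card S" for i
    using pick_in_set that by blast
  have minor: "submatrix (mat_diag n f) S S = mat_diag (card S) (\<lambda>i. f (pick S i))"
  proof (rule eq_matI)
    fix i j assume "i < dim_row (mat_diag (card S) (\<lambda>i. f (pick S i)))"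
      "j < dim_col (mat_diag (card S) (\<lambda>i. f (pick S i)))"
    then have ij: "i < card S" "j < card S" by (auto simp: mat_diag_def)
    have "pick S i = pick S j \<longleftrightarrow> i = j"
      using pick_mono[of _ S] ij by (metis nat_neq_iff order_less_irrefl)
    then show "submatrix (mat_diag n f) S S $$ (i, j) = mat_diag (card S) (\<lambda>i. f (pick S i)) $$ (i, j)"
      using ij pick_S[OF ij(1)] pick_S[OF ij(2)] S
      by (auto simp: submatrix_def mat_diag_def S_def)
  qed (auto simp: submatrix_def mat_diag_def S)
  have "det (submatrix (mat_diag n f) S S) \<noteq> 0"
    unfolding minor det_mat_diag using pick_S by (auto simp: S_def)
  from vec_space.rank_gt_minor[OF mat_diag_dim this] show ?thesis
    using S by (simp add: S_def)
qed

lemma rank_mat_diag: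
  fixes f :: "nat \<Rightarrow> 'a::field"
  shows "vec_space.rank n (mat_diag n f) = card {i. i < n \<and> f i \<noteq> 0}"
proof -
  have "mat_diag n f = mat_diag n (\<lambda>i. if i \<in> {i. i < n \<and> f i \<noteq> 0} then f i else 0)"
    by (auto simp: mat_diag_def)
  then show ?thesis
    using rank_mat_diag_le_card[of "{i. i < n \<and> f i \<noteq> 0}" n f] rank_mat_diag_ge_card[of n f]
    by simp
qed

lemma dim_mat_adjoint [simp]:
  "dim_row (mat_adjoint A) = dim_col A" "dim_col (mat_adjoint A) = dim_row A"
  unfolding mat_adjoint_def by simp_all

lemma index_mat_adjoint [simp]:
  "i < dim_col A \<Longrightarrow> j < dim_row A \<Longrightarrow> mat_adjoint A $$ (i, j) = conjugate (A $$ (j, i))"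
  unfolding mat_adjoint_def by (simp add: mat_of_rows_def)

lemma index_mult_mult_adjoint:
  fixes W A :: "complex mat"
  assumes "W \<in> carrier_mat n m" "A \<in> carrier_mat m m" "a < n" "b < n"
  shows "(W * A * mat_adjoint W) $$ (a, b) = (\<Sum>e<m. \<Sum>c<m. W $$ (a, c) * A $$ (c, e) * cnj (W $$ (b, e)))"
  using assms by (simp add: scalar_prod_def atLeast0LessThan sum_distrib_right)

definition mixture :: "nat \<Rightarrow> nat \<Rightarrow> (nat \<Rightarrow> real) \<Rightarrow> (nat \<Rightarrow> complex vec) \<Rightarrow> complex mat" where
  "mixture n k p \<psi> = mat n n (\<lambda>(a, b). \<Sum>i<k. complex_of_real (p i) * (\<psi> i $ a) * cnj (\<psi> i $ b))"

lemma mixture_carrier [simp]: "mixture n k p \<psi> \<in> carrier_mat n n"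
  unfolding mixture_def by simp

lemma pure_decomp_iff_mixture:
  "pure_decomp n \<rho> k p \<psi> \<longleftrightarrow>
     (\<forall>i<k. 0 \<le> p i \<and> unit_vec_c n (\<psi> i)) \<and> (\<Sum>i<k. p i) = 1 \<and> \<rho> = mixture n k p \<psi>"
  unfolding pure_decomp_def mixture_def ..

lemma mult_mixture_mult_adjoint:
  assumes W: "W \<in> carrier_mat n m" and \<psi>: "\<And>i. i < k \<Longrightarrow> \<psi> i \<in> carrier_vec m"
  shows "W * mixture m k p \<psi> * mat_adjoint W = mixture n k p (\<lambda>i. W *\<^sub>v \<psi> i)"
proof (rule eq_matI)
  fix a b assume "a < dim_row (mixture n k p (\<lambda>i. W *\<^sub>v \<psi> i))"
    "b < dim_col (mixture n k p (\<lambda>i. W *\<^sub>v \<psi> i))"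
  then have ab: "a < n" "b < n"
    by (simp_all add: mixture_def)
  have Wv: "(W *\<^sub>v \<psi> i) $ a = (\<Sum>c<m. W $$ (a, c) * \<psi> i $ c)" if "i < k" "a < n" for i a
    using W \<psi>[OF that(1)] that(2) by (simp add: scalar_prod_def atLeast0LessThan)
  let ?t = "\<lambda>i c e. complex_of_real (p i) * (W $$ (a, c) * \<psi> i $ c) * cnj (W $$ (b, e) * \<psi> i $ e)"
  have "(W * mixture m k p \<psi> * mat_adjoint W) $$ (a, b) = (\<Sum>e<m. \<Sum>c<m. \<Sum>i<k. ?t i c e)"
    using index_mult_mult_adjoint[OF W _ ab]
    by (simp add: mixture_def sum_distrib_left sum_distrib_right mult_ac)
  also have "\<dots> = (\<Sum>e<m. \<Sum>i<k. \<Sum>c<m. ?t i c e)"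
    by (rule sum.cong[OF refl], rule sum.swap)
  also have "\<dots> = (\<Sum>i<k. \<Sum>e<m. \<Sum>c<m. ?t i c e)"
    by (rule sum.swap)
  also have "\<dots> = (\<Sum>i<k. complex_of_real (p i) * (W *\<^sub>v \<psi> i) $ a * cnj ((W *\<^sub>v \<psi> i) $ b))"
    using ab by (simp add: Wv sum_distrib_left sum_distrib_right)
  finally show "(W * mixture m k p \<psi> * mat_adjoint W) $$ (a, b)
      = mixture n k p (\<lambda>i. W *\<^sub>v \<psi> i) $$ (a, b)"
    using ab by (simp add: mixture_def)
qed (use W in \<open>simp_all add: mixture_def\<close>)

lemma mixture_cong:
  assumes "\<And>i. i < k \<Longrightarrow> p i \<noteq> 0 \<Longrightarrow> \<psi> i = \<phi> i"
  shows "mixture n k p \<psi> = mixture n k p \<phi>"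
proof -
  have "complex_of_real (p i) * \<psi> i $ a * cnj (\<psi> i $ b) = complex_of_real (p i) * \<phi> i $ a * cnj (\<phi> i $ b)"
    if "i < k" for i a b
    using assms[OF that] by (cases "p i = 0") auto
  then show ?thesis
    unfolding mixture_def by (intro eq_matI) (auto intro!: sum.cong)
qed

lemma mixture_diag_eq_0_imp_eq_0:
  assumes p: "\<And>j. j < k \<Longrightarrow> 0 \<le> p j" and a: "a < n" and zero: "mixture n k p \<psi> $$ (a, a) = 0"
    and i: "i < k" "p i \<noteq> 0"
  shows "\<psi> i $ a = 0"
proof -
  have "complex_of_real (\<Sum>j<k. p j * (cmod (\<psi> j $ a))\<^sup>2) = mixture n k p \<psi> $$ (a, a)"
    using a by (simp add: mixture_def complex_norm_square mult.assoc del: of_real_power)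
  then have "(\<Sum>j<k. p j * (cmod (\<psi> j $ a))\<^sup>2) = 0"
    using zero by (metis of_real_eq_0_iff)
  then have "p i * (cmod (\<psi> i $ a))\<^sup>2 = 0"
    using p i(1) by (subst (asm) sum_nonneg_eq_0_iff) auto
  then show ?thesis
    using i(2) by simp
qed

lemma sum_cmod_square_isometry:
  fixes W :: "complex mat"
  assumes W: "W \<in> carrier_mat n m" "mat_adjoint W * W = 1\<^sub>m m" and v: "v \<in> carrier_vec m"
  shows "(\<Sum>a<n. (cmod ((W *\<^sub>v v) $ a))\<^sup>2) = (\<Sum>c<m. (cmod (v $ c))\<^sup>2)"
proof -
  have orth: "(\<Sum>a<n. cnj (W $$ (a, e)) * W $$ (a, c)) = (if e = c then 1 else 0)"
    if "e < m" "c < m" for e c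
  proof -
    have "(mat_adjoint W * W) $$ (e, c) = (\<Sum>a<n. cnj (W $$ (a, e)) * W $$ (a, c))"
      using W(1) that by (simp add: scalar_prod_def atLeast0LessThan)
    then show ?thesis
      using W(2) that by simp
  qed
  have "complex_of_real (\<Sum>a<n. (cmod ((W *\<^sub>v v) $ a))\<^sup>2) = (\<Sum>a<n. cnj ((W *\<^sub>v v) $ a) * (W *\<^sub>v v) $ a)"
    by (simp only: of_real_sum complex_norm_square mult.commute)
  also have "\<dots> = (\<Sum>a<n. \<Sum>e<m. \<Sum>c<m. cnj (v $ e) * v $ c * (cnj (W $$ (a, e)) * W $$ (a, c)))"
    using W v by (simp add: scalar_prod_def atLeast0LessThan sum_distrib_left sum_distrib_right mult_ac)
  also have "\<dots> = (\<Sum>e<m. \<Sum>c<m. \<Sum>a<n. cnj (v $ e) * v $ c * (cnj (W $$ (a, e)) * W $$ (a, c)))"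
    by (subst sum.swap, rule sum.cong[OF refl], rule sum.swap)
  also have "\<dots> = (\<Sum>e<m. \<Sum>c<m. if c = e then cnj (v $ e) * v $ c else 0)"
    by (intro sum.cong refl) (simp add: orth flip: sum_distrib_left)
  also have "\<dots> = (\<Sum>e<m. cnj (v $ e) * v $ e)"
    by simp
  also have "\<dots> = complex_of_real (\<Sum>c<m. (cmod (v $ c))\<^sup>2)"
    by (simp only: of_real_sum complex_norm_square mult.commute)
  finally show ?thesis
    by (simp only: of_real_eq_iff)
qed

lemma unit_vec_c_isometry:
  fixes W :: "complex mat"
  assumes "W \<in> carrier_mat n m" "mat_adjoint W * W = 1\<^sub>m m" "v \<in> carrier_vec m"
  shows "unit_vec_c n (W *\<^sub>v v) \<longleftrightarrow> unit_vec_c m v"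
  using assms sum_cmod_square_isometry[OF assms] by (simp add: unit_vec_c_def)

lemma isometry_conj_cancel:
  fixes W :: "complex mat"
  assumes W: "W \<in> carrier_mat n m" "mat_adjoint W * W = 1\<^sub>m m" and A: "A \<in> carrier_mat m m"
  shows "mat_adjoint W * (W * A * mat_adjoint W) * W = A"
proof -
  have W': "mat_adjoint W \<in> carrier_mat m n"
    using W(1) by auto
  have "mat_adjoint W * (W * A * mat_adjoint W) = mat_adjoint W * (W * (A * mat_adjoint W))"
    using W(1) W' A by simp
  also have "\<dots> = (mat_adjoint W * W) * (A * mat_adjoint W)"
    by (rule assoc_mult_mat[symmetric, OF W' W(1) mult_carrier_mat[OF A W']])
  also have "\<dots> = A * mat_adjoint W"
    using W(2) A W' by simp
  finally have "mat_adjoint W * (W * A * mat_adjoint W) * W = A * (mat_adjoint W * W)"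
    using W(1) W' A by simp
  then show ?thesis
    using W(2) A by simp
qed

lemma isometry_conj_inj:
  fixes W :: "complex mat"
  assumes "W \<in> carrier_mat n m" "mat_adjoint W * W = 1\<^sub>m m" "A \<in> carrier_mat m m" "B \<in> carrier_mat m m"
    and "W * A * mat_adjoint W = W * B * mat_adjoint W"
  shows "A = B"
proof -
  have "A = mat_adjoint W * (W * A * mat_adjoint W) * W"
    using isometry_conj_cancel[OF assms(1-3)] by simp
  also have "\<dots> = B"
    unfolding assms(5) by (rule isometry_conj_cancel[OF assms(1,2,4)])
  finally show ?thesis .
qed

lemma unit_vec_c_unit_vec: "i < n \<Longrightarrow> unit_vec_c n (unit_vec n i)"
  by (simp add: unit_vec_c_def unit_vec_def if_distrib[of "\<lambda>x. (cmod x)\<^sup>2"] cong: if_cong)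

lemma pure_decomp_carrier_vec: "pure_decomp n \<rho> k p \<psi> \<Longrightarrow> i < k \<Longrightarrow> \<psi> i \<in> carrier_vec n"
  by (simp add: pure_decomp_def unit_vec_c_def)

lemma pure_decomp_isometry_conj:
  fixes W :: "complex mat"
  assumes W: "W \<in> carrier_mat n m" "mat_adjoint W * W = 1\<^sub>m m" and pd: "pure_decomp m \<rho> k p \<psi>"
  shows "pure_decomp n (W * \<rho> * mat_adjoint W) k p (\<lambda>i. W *\<^sub>v \<psi> i)"
  using pd unit_vec_c_isometry[OF W pure_decomp_carrier_vec[OF pd]]
    mult_mixture_mult_adjoint[OF W(1) pure_decomp_carrier_vec[OF pd]]
  by (simp add: pure_decomp_iff_mixture)

lemma pair_index_less:
  fixes i j d :: nat
  assumes "i < d" "j < d"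
  shows "i * d + j < d * d"
proof -
  have "i * d + j < Suc i * d"
    using assms(2) by simp
  also have "\<dots> \<le> d * d"
    using assms(1) by (intro mult_le_mono1) simp
  finally show ?thesis .
qed

lemma pair_index_eq_iff:
  fixes i j i' j' d :: nat
  assumes "j < d" "j' < d"
  shows "i * d + j = i' * d + j' \<longleftrightarrow> i = i' \<and> j = j'"
proof
  assume eq: "i * d + j = i' * d + j'"
  have "(i * d + j) div d = i" "(i' * d + j') div d = i'" "(i * d + j) mod d = j" "(i' * d + j') mod d = j'"
    using assms by simp_all
  then show "i = i' \<and> j = j'"
    using eq by metis
qed simp

lemma pair_index_cases:
  fixes a d :: nat
  assumes "a < d * d"
  obtains i j where "i < d" "j < d" "a = i * d + j"
proof
  show "a div d < d"
    using assms by (rule less_mult_imp_div_less)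
  show "a mod d < d"
    using assms by (cases "d = 0") simp_all
  show "a = a div d * d + a mod d"
    by simp
qed

(* e_k \<mapsto> e_k \<otimes> e_k, with e_i \<otimes> e_j at index i * d + j as in coeff_mat *)
definition copy_isometry :: "nat \<Rightarrow> complex mat" where
  "copy_isometry d = mat (d * d) d (\<lambda>(a, k). if a = k * d + k then 1 else 0)"

lemma dim_copy_isometry [simp]:
  "dim_row (copy_isometry d) = d * d" "dim_col (copy_isometry d) = d"
  unfolding copy_isometry_def by simp_all

lemma copy_isometry_carrier [simp]: "copy_isometry d \<in> carrier_mat (d * d) d"
  unfolding copy_isometry_def by simp

lemma mult_copy_isometry:
  assumes v: "v \<in> carrier_vec d" and ij: "i < d" "j < d"
  shows "(copy_isometry d *\<^sub>v v) $ (i * d + j) = (if i = j then v $ i else 0)"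
proof -
  have "(copy_isometry d *\<^sub>v v) $ (i * d + j) = (\<Sum>k<d. (if i * d + j = k * d + k then 1 else 0) * v $ k)"
    using v pair_index_less[OF ij]
    by (simp add: copy_isometry_def scalar_prod_def atLeast0LessThan)
  also have "\<dots> = (\<Sum>k<d. if k = i then (if i = j then v $ k else 0) else 0)"
    using ij(2) by (intro sum.cong refl) (auto simp: pair_index_eq_iff)
  finally show ?thesis
    using ij(1) by simp
qed

lemma copy_isometry_isometry: "mat_adjoint (copy_isometry d) * copy_isometry d = 1\<^sub>m d"
proof (rule eq_matI)
  let ?W = "copy_isometry d"
  fix e c assume "e < dim_row (1\<^sub>m d :: complex mat)" "c < dim_col (1\<^sub>m d :: complex mat)"
  then have ec: "e < d" "c < d"
    by simp_all
  have "(mat_adjoint ?W * ?W) $$ (e, c) = (\<Sum>a<d * d. cnj (?W $$ (a, e)) * ?W $$ (a, c))"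
    using ec by (simp add: scalar_prod_def atLeast0LessThan)
  also have "\<dots> = (\<Sum>a<d * d. if a = e * d + e then (if a = c * d + c then 1 else 0) else 0)"
    using ec by (intro sum.cong refl) (simp add: copy_isometry_def)
  also have "\<dots> = (if e = c then 1 else 0)"
    using ec pair_index_less[OF ec(1) ec(1)] by (simp add: pair_index_eq_iff)
  finally show "(mat_adjoint ?W * ?W) $$ (e, c) = (1\<^sub>m d :: complex mat) $$ (e, c)"
    using ec by simp
qed (simp_all add: copy_isometry_def)

lemma coeff_mat_copy_isometry:
  assumes "v \<in> carrier_vec d"
  shows "coeff_mat d (copy_isometry d *\<^sub>v v) = mat_diag d (\<lambda>i. v $ i)"
  using assms by (intro eq_matI) (simp_all add: coeff_mat_def mat_diag_def mult_copy_isometry)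

lemma LE_pure_copy_isometry:
  assumes "v \<in> carrier_vec d"
  shows "LE_pure d (copy_isometry d *\<^sub>v v) = LC_pure v"
  using assms
  by (simp add: LE_pure_def LC_pure_def schmidt_rank_def coh_rank_def coeff_mat_copy_isometry rank_mat_diag)

lemma copy_isometry_range:
  assumes \<phi>: "\<phi> \<in> carrier_vec (d * d)"
    and off_diag: "\<And>i j. i < d \<Longrightarrow> j < d \<Longrightarrow> i \<noteq> j \<Longrightarrow> \<phi> $ (i * d + j) = 0"
  shows "copy_isometry d *\<^sub>v vec d (\<lambda>k. \<phi> $ (k * d + k)) = \<phi>"
proof (rule eq_vecI)
  fix a assume "a < dim_vec \<phi>"
  then have "a < d * d"
    using \<phi> by simp
  then obtain i j where "i < d" "j < d" "a = i * d + j"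
    by (rule pair_index_cases)
  then show "(copy_isometry d *\<^sub>v vec d (\<lambda>k. \<phi> $ (k * d + k))) $ a = \<phi> $ a"
    using off_diag by (simp add: mult_copy_isometry)
qed (use \<phi> in simp)

lemma copy_isometry_conj_off_diag:
  assumes \<rho>: "\<rho> \<in> carrier_mat d d" and ij: "i < d" "j < d" "i \<noteq> j"
  shows "(copy_isometry d * \<rho> * mat_adjoint (copy_isometry d)) $$ (i * d + j, i * d + j) = 0"
proof -
  have a: "i * d + j < d * d"
    using ij(1,2) by (rule pair_index_less)
  have "copy_isometry d $$ (i * d + j, c) = 0" if "c < d" for c
    using ij that a by (simp add: copy_isometry_def pair_index_eq_iff)
  then show ?thesis
    using index_mult_mult_adjoint[OF copy_isometry_carrier \<rho> a a] by simp
qed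

lemma pure_decomp_copy_isometry_conj_pullback:
  assumes \<rho>: "\<rho> \<in> carrier_mat d d"
    and pd: "pure_decomp (d * d) (copy_isometry d * \<rho> * mat_adjoint (copy_isometry d)) k p \<phi>"
  obtains \<psi> where "pure_decomp d \<rho> k p \<psi>" "\<And>i. i < k \<Longrightarrow> p i \<noteq> 0 \<Longrightarrow> \<phi> i = copy_isometry d *\<^sub>v \<psi> i"
proof -
  let ?W = "copy_isometry d"
  have p: "\<And>i. i < k \<Longrightarrow> 0 \<le> p i \<and> unit_vec_c (d * d) (\<phi> i)" "(\<Sum>i<k. p i) = 1"
    and R: "?W * \<rho> * mat_adjoint ?W = mixture (d * d) k p \<phi>"
    using pd by (simp_all add: pure_decomp_iff_mixture)
  have "0 < d"
  proof (rule ccontr)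
    assume "\<not> 0 < d"
    have "0 < k"
      using p(2) by (cases k) auto
    then have "unit_vec_c (d * d) (\<phi> 0)"
      using p(1) by simp
    with \<open>\<not> 0 < d\<close> show False
      by (simp add: unit_vec_c_def)
  qed
  \<comment> \<open>components of weight zero are irrelevant and only need to be unit vectors\<close>
  define \<psi> where "\<psi> i = (if p i = 0 then unit_vec d 0 else vec d (\<lambda>j. \<phi> i $ (j * d + j)))" for i
  have \<psi>_carrier: "\<psi> i \<in> carrier_vec d" for i
    by (simp add: \<psi>_def)
  have \<phi>: "\<phi> i = ?W *\<^sub>v \<psi> i" if i: "i < k" "p i \<noteq> 0" for i
  proof -
    have "\<phi> i $ (a * d + b) = 0" if "a < d" "b < d" "a \<noteq> b" for a b
      using mixture_diag_eq_0_imp_eq_0[of k p "a * d + b" "d * d" \<phi> i] pair_index_less[OF that(1,2)]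
        copy_isometry_conj_off_diag[OF \<rho> that] R p(1) i by auto
    then show ?thesis
      using copy_isometry_range[of "\<phi> i" d] p(1)[OF i(1)] i(2) by (simp add: \<psi>_def unit_vec_c_def)
  qed
  have \<psi>_unit: "unit_vec_c d (\<psi> i)" if "i < k" for i
  proof (cases "p i = 0")
    case True
    then show ?thesis
      using \<open>0 < d\<close> by (simp add: \<psi>_def unit_vec_c_unit_vec)
  next
    case False
    then show ?thesis
      using p(1)[OF that] \<phi>[OF that False]
        unit_vec_c_isometry[OF copy_isometry_carrier copy_isometry_isometry \<psi>_carrier]
      by simp
  qed
  have "?W * \<rho> * mat_adjoint ?W = ?W * mixture d k p \<psi> * mat_adjoint ?W"
    unfolding R mult_mixture_mult_adjoint[OF copy_isometry_carrier \<psi>_carrier] by (rule mixture_cong) (rule \<phi>)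
  then have "\<rho> = mixture d k p \<psi>"
    by (rule isometry_conj_inj[OF copy_isometry_carrier copy_isometry_isometry \<rho> mixture_carrier])
  then have "pure_decomp d \<rho> k p \<psi>"
    using p \<psi>_unit by (simp add: pure_decomp_iff_mixture)
  then show ?thesis
    using that \<phi> by blast
qed

lemma copy_isometry_decomposition_values:
  assumes \<rho>: "\<rho> \<in> carrier_mat d d"
  shows "{(\<Sum>i<k. p i * LC_pure (\<psi> i)) | k p \<psi>. pure_decomp d \<rho> k p \<psi>} =
    {(\<Sum>i<k. p i * LE_pure d (\<phi> i)) | k p \<phi>.
      pure_decomp (d * d) (copy_isometry d * \<rho> * mat_adjoint (copy_isometry d)) k p \<phi>}"
proof (intro equalityI subsetI)
  let ?W = "copy_isometry d"
  let ?R = "?W * \<rho> * mat_adjoint ?W"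
  fix x assume "x \<in> {(\<Sum>i<k. p i * LC_pure (\<psi> i)) | k p \<psi>. pure_decomp d \<rho> k p \<psi>}"
  then obtain k p \<psi> where x: "x = (\<Sum>i<k. p i * LC_pure (\<psi> i))" and pd: "pure_decomp d \<rho> k p \<psi>"
    by blast
  have "pure_decomp (d * d) ?R k p (\<lambda>i. ?W *\<^sub>v \<psi> i)"
    using copy_isometry_carrier copy_isometry_isometry pd by (rule pure_decomp_isometry_conj)
  moreover have "x = (\<Sum>i<k. p i * LE_pure d (?W *\<^sub>v \<psi> i))"
    unfolding x using pure_decomp_carrier_vec[OF pd] by (simp add: LE_pure_copy_isometry)
  ultimately show "x \<in> {(\<Sum>i<k. p i * LE_pure d (\<phi> i)) | k p \<phi>. pure_decomp (d * d) ?R k p \<phi>}"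
    unfolding mem_Collect_eq by (intro exI[of _ k] exI[of _ p] exI[of _ "\<lambda>i. ?W *\<^sub>v \<psi> i"] conjI)
next
  let ?W = "copy_isometry d"
  let ?R = "?W * \<rho> * mat_adjoint ?W"
  fix x assume "x \<in> {(\<Sum>i<k. p i * LE_pure d (\<phi> i)) | k p \<phi>. pure_decomp (d * d) ?R k p \<phi>}"
  then obtain k p \<phi> where x: "x = (\<Sum>i<k. p i * LE_pure d (\<phi> i))" and pd: "pure_decomp (d * d) ?R k p \<phi>"
    by blast
  obtain \<psi> where pd': "pure_decomp d \<rho> k p \<psi>"
    and \<phi>: "\<And>i. i < k \<Longrightarrow> p i \<noteq> 0 \<Longrightarrow> \<phi> i = ?W *\<^sub>v \<psi> i"
    using pure_decomp_copy_isometry_conj_pullback[OF \<rho> pd] by blast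
  have "x = (\<Sum>i<k. p i * LC_pure (\<psi> i))"
    unfolding x using \<phi> pure_decomp_carrier_vec[OF pd']
    by (intro sum.cong refl) (metis LE_pure_copy_isometry lessThan_iff mult_zero_left)
  with pd' show "x \<in> {(\<Sum>i<k. p i * LC_pure (\<psi> i)) | k p \<psi>. pure_decomp d \<rho> k p \<psi>}"
    by blast
qed

theorem proposition6:
  fixes d :: nat
  shows "\<exists>W \<in> carrier_mat (d * d) d. mat_adjoint W * W = 1\<^sub>m d \<and>
           (\<forall>\<rho>. density_mat d \<rho> \<longrightarrow> LC d \<rho> = LE d (W * \<rho> * mat_adjoint W))"
proof (intro bexI[of _ "copy_isometry d"] conjI allI impI)
  show "copy_isometry d \<in> carrier_mat (d * d) d"
    by simp
  show "mat_adjoint (copy_isometry d) * copy_isometry d = 1\<^sub>m d"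
    by (rule copy_isometry_isometry)
  fix \<rho> assume "density_mat d \<rho>"
  then have "\<rho> \<in> carrier_mat d d"
    by (simp add: density_mat_def)
  then show "LC d \<rho> = LE d (copy_isometry d * \<rho> * mat_adjoint (copy_isometry d))"
    unfolding LC_def LE_def by (simp only: copy_isometry_decomposition_values)
qed

end
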